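(* For the boundary Markov chain $(M_n)$ started from any fixed initial state and any $\varepsilon>0$, almost surely \[ \lim_{n\to\infty} \frac{M_n \log^{2+\varepsilon} n}{n^{2/3}} = \infty . \]
   Context: The boundary Markov chain is the Markov chain $(M_n)_{n\ge0}$ on $\{0,1,2,\dots\}$ with $M_{n+1}=M_n+X_n$. Given $M_n=m$, its step $X_n$ has the law \[ \mathbb P(X_n=1\mid M_n=m)=\frac{2m+3}{3m+3}. \] For $1\le k\le m$, \[ \mathbb P(X_n=-k\mid M_n=m)=\frac{2(2k-2)!}{(k-1)!(k+1)!}\cdot\frac{m!^2(2m-2k+1)!}{(m-k)!^2(2m+1)!}. \] *)

theory Defs
  imports "HOL-Probability.Probability"
begin

definition bmc_step_prob :: "nat \<Rightarrow> int \<Rightarrow> real" where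
  "bmc_step_prob m x =
     (if x = 1 then (2 * real m + 3) / (3 * real m + 3)
      else if - int m \<le> x \<and> x \<le> -1 then
        (let k = nat (- x) in
          (2 * fact (2*k - 2) / (fact (k - 1) * fact (k + 1))) *
          (fact m ^ 2 * fact (2*m - 2*k + 1) / (fact (m - k) ^ 2 * fact (2*m + 1))))
      else 0)"

definition bmc_trans :: "nat \<Rightarrow> nat \<Rightarrow> real" where
  "bmc_trans m m' = bmc_step_prob m (int m' - int m)"

definition boundary_markov_chain :: "'a measure \<Rightarrow> (nat \<Rightarrow> 'a \<Rightarrow> nat) \<Rightarrow> nat \<Rightarrow> bool" where
  "boundary_markov_chain M X m0 \<longleftrightarrow>
     prob_space M \<and>
     (\<forall>n. X n \<in> measurable M (count_space UNIV)) \<and>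
     measure M {\<omega> \<in> space M. X 0 \<omega> = m0} = 1 \<and>
     (\<forall>n (s :: nat \<Rightarrow> nat).
        measure M {\<omega> \<in> space M. \<forall>i\<le>Suc n. X i \<omega> = s i} =
        measure M {\<omega> \<in> space M. \<forall>i\<le>n. X i \<omega> = s i} * bmc_trans (s n) (s (Suc n)))"

end

theory Submission
  imports Defs
begin

text \<open>
  The function potential m = 4^m (m!)^2 / (2m+1)!, of order m^(-1/2), is superharmonic for
  the chain: one step multiplies its conditional mean by 1 - b_m / (3(m+1)), where
  b_m = binom(2m, m) / 4^m, and this loss is at least potential(m)^4 / 48. By Jensen's
  inequality u_n = E potential(M_n) satisfies u_(n+1) <= u_n - u_n^4 / 48, hence u_n^3 <= 16 / n.
  Optional stopping at the first time after N at which the chain is at most a gives, as the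
  potential is decreasing, the maximal inequality
  potential(a) P(M_t <= a for some t in [N, N+K]) <= u_N.
  On the block [8^j, 8^(j+1)] with a = c 4^(j+1) / j^(2+eps) this probability is
  O(j^(-1-eps/2) + 2^(-j)), which is summable; since n^(2/3) <= 4^(j+1) and ln n >= j on the
  block, Borel-Cantelli for every c gives the theorem.
\<close>

section \<open>A superharmonic potential\<close>

definition central_binomial_prob :: "nat \<Rightarrow> real" where
  "central_binomial_prob m = fact (2*m) / (fact m ^ 2 * 4 ^ m)"

definition potential :: "nat \<Rightarrow> real" where
  "potential m = fact m ^ 2 * 4 ^ m / fact (2*m+1)"

lemma central_binomial_prob_pos [simp]: "central_binomial_prob m > 0"
  by (simp add: central_binomial_prob_def)

lemma potential_pos [simp]: "potential m > 0"
  by (simp add: potential_def)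

lemma potential_0 [simp]: "potential 0 = 1"
  by (simp add: potential_def)

lemma potential_eq_inverse: "potential m = 1 / ((2 * real m + 1) * central_binomial_prob m)"
proof -
  have "fact (2*m+1) = (2 * real m + 1) * (fact (2*m) :: real)"
    by simp
  then show ?thesis
    by (simp add: potential_def central_binomial_prob_def)
qed

lemma central_binomial_prob_Suc:
  "central_binomial_prob (Suc m) = central_binomial_prob m * (2 * real m + 1) / (2 * real m + 2)"
proof -
  have "fact (2 * Suc m) = (2 * real m + 2) * (2 * real m + 1) * (fact (2*m) :: real)"
    by (simp add: algebra_simps)
  moreover have "fact (Suc m) = (real m + 1) * (fact m :: real)"
    by simp
  ultimately show ?thesis
    unfolding central_binomial_prob_def
    by (simp add: divide_simps) (simp add: algebra_simps power2_eq_square)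
qed

lemma potential_Suc: "potential (Suc m) = potential m * (2 * real m + 2) / (2 * real m + 3)"
proof -
  have "potential (Suc m) =
      1 / ((2 * real m + 3) * (central_binomial_prob m * (2 * real m + 1) / (2 * real m + 2)))"
    unfolding potential_eq_inverse central_binomial_prob_Suc by (simp add: algebra_simps)
  also have "\<dots> = potential m * (2 * real m + 2) / (2 * real m + 3)"
    unfolding potential_eq_inverse using central_binomial_prob_pos[of m] by (simp add: divide_simps)
  finally show ?thesis .
qed

lemma decseq_potential: "decseq potential"
proof (rule decseq_SucI)
  show "potential (Suc m) \<le> potential m" for m
    unfolding potential_Suc using potential_pos[of m] by (simp add: divide_simps)
qed

lemmas potential_antimono = decseqD[OF decseq_potential]

lemma potential_le_one: "potential m \<le> 1"
  using potential_antimono[of 0 m] by simp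

lemma central_binomial_prob_sq_ge: "1 \<le> central_binomial_prob m ^ 2 * (4 * real m + 1)"
proof (induction m)
  case 0
  then show ?case by (simp add: central_binomial_prob_def)
next
  case (Suc m)
  define x where "x = real m"
  have x: "x \<ge> 0" by (simp add: x_def)
  have sq: "central_binomial_prob (Suc m) ^ 2 = central_binomial_prob m ^ 2 * (2*x+1)^2 / (2*x+2)^2"
    by (simp add: central_binomial_prob_Suc power_divide power_mult_distrib x_def)
  have "central_binomial_prob (Suc m) ^ 2 * (4 * real (Suc m) + 1) =
      central_binomial_prob m ^ 2 * ((2*x+1)^2 * (4*x+5) / (2*x+2)^2)"
    unfolding sq by (simp add: x_def algebra_simps)
  also have "\<dots> \<ge> central_binomial_prob m ^ 2 * (4*x+1)"
  proof (rule mult_left_mono)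
    have "(2*x+1)^2 * (4*x+5) = (4*x+1) * (2*x+2)^2 + 1"
      by (simp add: power2_eq_square algebra_simps)
    then show "4*x+1 \<le> (2*x+1)^2 * (4*x+5) / (2*x+2)^2"
      using x by (simp add: le_divide_eq)
  qed simp
  finally show ?case using Suc by (simp add: x_def)
qed

lemma central_binomial_prob_sq_le: "central_binomial_prob m ^ 2 * (2 * real m + 1) \<le> 1"
proof (induction m)
  case 0
  then show ?case by (simp add: central_binomial_prob_def)
next
  case (Suc m)
  define x where "x = real m"
  have x: "x \<ge> 0" by (simp add: x_def)
  have sq: "central_binomial_prob (Suc m) ^ 2 = central_binomial_prob m ^ 2 * (2*x+1)^2 / (2*x+2)^2"
    by (simp add: central_binomial_prob_Suc power_divide power_mult_distrib x_def)
  have "central_binomial_prob (Suc m) ^ 2 * (2 * real (Suc m) + 1) =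
      central_binomial_prob m ^ 2 * ((2*x+1)^2 * (2*x+3) / (2*x+2)^2)"
    unfolding sq by (simp add: x_def algebra_simps)
  also have "\<dots> \<le> central_binomial_prob m ^ 2 * (2*x+1)"
  proof (rule mult_left_mono)
    have "(2*x+1)^2 * (2*x+3) + (2*x+1) = (2*x+1) * (2*x+2)^2"
      by (simp add: power2_eq_square algebra_simps)
    then show "(2*x+1)^2 * (2*x+3) / (2*x+2)^2 \<le> 2*x+1"
      using x by (simp add: divide_le_eq)
  qed simp
  finally show ?case using Suc by (simp add: x_def)
qed

lemma sum_central_binomial_prob:
  "(\<Sum>k=1..m. central_binomial_prob (k-1) / (2 * real k * (real k + 1))) =
     1/3 - central_binomial_prob m / (3 * (real m + 1))"
proof (induction m)
  case 0
  then show ?case by (simp add: central_binomial_prob_def)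
next
  case (Suc m)
  have "(\<Sum>k=1..Suc m. central_binomial_prob (k-1) / (2 * real k * (real k + 1))) =
      (\<Sum>k=1..m. central_binomial_prob (k-1) / (2 * real k * (real k + 1))) +
      central_binomial_prob m / (2 * (real m + 1) * (real m + 2))"
    by (simp add: algebra_simps)
  also have "\<dots> = 1/3 - central_binomial_prob (Suc m) / (3 * (real (Suc m) + 1))"
    unfolding Suc central_binomial_prob_Suc by (simp add: divide_simps) (simp add: algebra_simps)
  finally show ?case .
qed

lemma potential_cube_le: "potential m ^ 3 / 48 \<le> central_binomial_prob m / (3 * (real m + 1))"
proof -
  define x y where "x = real m" and "y = central_binomial_prob m"
  have x: "x \<ge> 0" and y: "y > 0"
    by (simp_all add: x_def y_def)
  have "1 \<le> (y^2 * (4*x+1))^2"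
    using central_binomial_prob_sq_ge[of m] by (simp add: x_def y_def)
  then have y4: "1 \<le> y^4 * (4*x+1)^2"
    by (simp add: power_mult_distrib flip: power_mult)
  have "48 * (2*x+1)^3 - 3*(x+1) * (4*x+1)^2 = 336*x^3 + 504*x^2 + 261*x + 45"
    by (simp add: power2_eq_square power3_eq_cube algebra_simps)
  then have poly: "3*(x+1) * (4*x+1)^2 \<le> 48 * (2*x+1)^3"
    using x by (smt (verit) zero_le_power)
  have "3*(x+1) \<le> 3*(x+1) * (y^4 * (4*x+1)^2)"
    using y4 x by simp
  also have "\<dots> = y^4 * (3*(x+1) * (4*x+1)^2)"
    by simp
  also have "\<dots> \<le> y^4 * (48 * (2*x+1)^3)"
    using poly by (intro mult_left_mono) auto
  finally have "3*(x+1) \<le> 48 * ((2*x+1)*y)^3 * y"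
    by (simp add: power_mult_distrib power3_eq_cube power4_eq_xxxx mult_ac)
  then have "1 / (48 * ((2*x+1)*y)^3) \<le> y / (3*(x+1))"
    using x y by (simp add: divide_simps mult_ac)
  then show ?thesis
    by (simp add: potential_eq_inverse x_def y_def power_one_over)
qed

lemma inverse_potential_le_sqrt: "1 / potential m \<le> sqrt (2 * real m + 1)"
proof (rule real_le_rsqrt)
  have "(1 / potential m)^2 = (2 * real m + 1) * (central_binomial_prob m ^ 2 * (2 * real m + 1))"
    by (simp add: potential_eq_inverse power2_eq_square)
  also have "\<dots> \<le> (2 * real m + 1) * 1"
    by (intro mult_left_mono central_binomial_prob_sq_le) simp
  finally show "(1 / potential m)^2 \<le> 2 * real m + 1"
    by simp
qed

lemma bmc_trans_nonneg: "bmc_trans m m' \<ge> 0"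
  unfolding bmc_trans_def bmc_step_prob_def Let_def
  by (auto intro!: mult_nonneg_nonneg divide_nonneg_nonneg)

lemma bmc_trans_eq_0_if_gt: "Suc m < m' \<Longrightarrow> bmc_trans m m' = 0"
  unfolding bmc_trans_def bmc_step_prob_def by auto

lemma bmc_trans_self [simp]: "bmc_trans m m = 0"
  unfolding bmc_trans_def bmc_step_prob_def by auto

lemma bmc_trans_Suc: "bmc_trans m (Suc m) = (2 * real m + 3) / (3 * real m + 3)"
  unfolding bmc_trans_def bmc_step_prob_def by simp

lemma bmc_trans_down_potential:
  assumes "k \<ge> 1"
  shows "bmc_trans (j + k) j * potential j =
    potential (j + k) * central_binomial_prob (k - 1) / (2 * real k * (real k + 1))"
proof -
  obtain i where k: "k = Suc i"
    using assms by (cases k) auto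
  have "bmc_trans (j + k) j = 2 * fact (2*i) / (fact i * fact (i+2)) *
      (fact (j+k) ^ 2 * fact (2*j+1) / (fact j ^ 2 * fact (2*(j+k)+1)))"
    unfolding bmc_trans_def bmc_step_prob_def Let_def using k
    by (simp add: nat_add_distrib numeral_2_eq_2)
  moreover have "fact (i+2) = (real i + 1) * (real i + 2) * (fact i :: real)"
    by (simp add: numeral_2_eq_2 algebra_simps)
  moreover have "(4::real) ^ (j+k) = 4 ^ j * 4 * 4 ^ i"
    by (simp add: k power_add)
  ultimately show ?thesis
    unfolding potential_def central_binomial_prob_def using k
    by (simp add: divide_simps) (simp add: algebra_simps power2_eq_square)
qed

lemma bmc_trans_potential_sum:
  assumes "Suc m \<le> B"
  shows "(\<Sum>m'=0..B. bmc_trans m m' * potential m') =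
    potential m * (1 - central_binomial_prob m / (3 * (real m + 1)))"
proof -
  have "(\<Sum>m'=0..B. bmc_trans m m' * potential m') = (\<Sum>m'=0..Suc m. bmc_trans m m' * potential m')"
    by (rule sum.mono_neutral_right) (use assms bmc_trans_eq_0_if_gt in auto)
  also have "\<dots> = (\<Sum>m'<m. bmc_trans m m' * potential m') + bmc_trans m (Suc m) * potential (Suc m)"
    by (simp add: atLeast0AtMost lessThan_Suc_atMost[symmetric])
  also have "(\<Sum>m'<m. bmc_trans m m' * potential m') = (\<Sum>k=1..m. bmc_trans m (m-k) * potential (m-k))"
    by (rule sum.reindex_bij_witness[of _ "\<lambda>m'. m - m'" "\<lambda>k. m - k"]) auto
  also have "\<dots> = (\<Sum>k=1..m. potential m * (central_binomial_prob (k-1) / (2 * real k * (real k + 1))))"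
  proof (rule sum.cong[OF refl])
    fix k assume "k \<in> {1..m}"
    then show "bmc_trans m (m-k) * potential (m-k) =
        potential m * (central_binomial_prob (k-1) / (2 * real k * (real k + 1)))"
      using bmc_trans_down_potential[of k "m-k"] by simp
  qed
  also have "\<dots> = potential m * (1/3 - central_binomial_prob m / (3 * (real m + 1)))"
    by (simp only: sum_distrib_left[symmetric] sum_central_binomial_prob)
  also have "bmc_trans m (Suc m) * potential (Suc m) = potential m * (2/3)"
    unfolding bmc_trans_Suc potential_Suc by (simp add: divide_simps; simp add: algebra_simps)
  finally show ?thesis
    by (simp add: algebra_simps)
qed

lemma bmc_trans_potential_sum_le: "(\<Sum>m'=0..B. bmc_trans m m' * potential m') \<le> potential m"
proof -
  have "(\<Sum>m'=0..B. bmc_trans m m' * potential m') \<le> (\<Sum>m'=0..max B (Suc m). bmc_trans m m' * potential m')"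
    by (rule sum_mono2) (auto intro!: mult_nonneg_nonneg bmc_trans_nonneg less_imp_le[OF potential_pos])
  also have "\<dots> = potential m * (1 - central_binomial_prob m / (3 * (real m + 1)))"
    by (rule bmc_trans_potential_sum) simp
  also have "\<dots> \<le> potential m"
    using potential_pos[of m] central_binomial_prob_pos[of m]
    by (simp add: mult_le_cancel_left1 zero_le_divide_iff less_imp_le)
  finally show ?thesis .
qed

section \<open>Events determined by an initial segment of the chain\<close>

locale boundary_chain = prob_space M for M :: "'a measure" +
  fixes X :: "nat \<Rightarrow> 'a \<Rightarrow> nat" and m0 :: nat
  assumes measurable_X [measurable]: "\<And>n. X n \<in> measurable M (count_space UNIV)"
    and prob_start: "prob {\<omega> \<in> space M. X 0 \<omega> = m0} = 1"
    and prob_cylinder_Suc: "\<And>n s. prob {\<omega> \<in> space M. \<forall>i\<le>Suc n. X i \<omega> = s i} =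
        prob {\<omega> \<in> space M. \<forall>i\<le>n. X i \<omega> = s i} * bmc_trans (s n) (s (Suc n))"
begin

definition cylinder :: "nat \<Rightarrow> (nat \<Rightarrow> nat) \<Rightarrow> 'a set" where
  "cylinder n s = {\<omega> \<in> space M. \<forall>i\<le>n. X i \<omega> = s i}"

definition path_prob :: "nat \<Rightarrow> (nat \<Rightarrow> nat) \<Rightarrow> real" where
  "path_prob n s = prob (cylinder n s)"

lemma cylinder_sets [measurable]: "cylinder n s \<in> events"
  unfolding cylinder_def by measurable

lemma cylinder_cong: "(\<And>i. i \<le> n \<Longrightarrow> s i = t i) \<Longrightarrow> cylinder n s = cylinder n t"
  unfolding cylinder_def by auto

lemma path_prob_0: "path_prob 0 s = (if s 0 = m0 then 1 else 0)"
proof -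
  have cyl: "cylinder 0 s = {\<omega> \<in> space M. X 0 \<omega> = s 0}"
    unfolding cylinder_def by auto
  have start: "{\<omega> \<in> space M. X 0 \<omega> = m0} \<in> events"
    by measurable
  show ?thesis
  proof (cases "s 0 = m0")
    case True
    then show ?thesis
      using prob_start unfolding path_prob_def cyl by simp
  next
    case False
    then have "cylinder 0 s \<subseteq> space M - {\<omega> \<in> space M. X 0 \<omega> = m0}"
      unfolding cyl by auto
    then have "prob (cylinder 0 s) \<le> prob (space M - {\<omega> \<in> space M. X 0 \<omega> = m0})"
      by (intro finite_measure_mono) (use start in auto)
    also have "\<dots> = 0"
      using prob_compl[OF start] prob_start by simp
    finally show ?thesis
      using False unfolding path_prob_def by (simp add: antisym)
  qed
qed

lemma path_prob_Suc: "path_prob (Suc n) s = path_prob n s * bmc_trans (s n) (s (Suc n))"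
  unfolding path_prob_def cylinder_def by (rule prob_cylinder_Suc)

lemma path_prob_eq_prod:
  "path_prob n s = (if s 0 = m0 then \<Prod>i<n. bmc_trans (s i) (s (Suc i)) else 0)"
  by (induction n) (simp_all add: path_prob_0 path_prob_Suc)

text \<open>The chain moves up by at most one per step.\<close>

lemma path_prob_nonzero_imp_le:
  assumes "path_prob n s \<noteq> 0" "i \<le> n"
  shows "s i \<le> m0 + i"
  using assms(2)
proof (induction i)
  case 0
  then show ?case
    using assms(1) unfolding path_prob_eq_prod by (auto split: if_splits)
next
  case (Suc i)
  have "bmc_trans (s i) (s (Suc i)) \<noteq> 0"
    using assms(1) Suc.prems unfolding path_prob_eq_prod by (auto split: if_splits)
  then have "s (Suc i) \<le> Suc (s i)"
    using bmc_trans_eq_0_if_gt not_less by blast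
  then show ?case
    using Suc by simp
qed

lemma cylinder_null_if_gt:
  assumes "i \<le> n" "m0 + n < s i"
  shows "cylinder n s \<in> null_sets M"
proof -
  have "path_prob n s = 0"
  proof (rule ccontr)
    assume "path_prob n s \<noteq> 0"
    from path_prob_nonzero_imp_le[OF this assms(1)] show False
      using assms by linarith
  qed
  then show ?thesis
    unfolding path_prob_def by (simp add: emeasure_eq_measure null_sets_def)
qed

definition paths :: "nat \<Rightarrow> nat \<Rightarrow> (nat \<Rightarrow> nat) set" where
  "paths n B = PiE {0..n} (\<lambda>_. {0..B})"

lemma finite_paths: "finite (paths n B)"
  unfolding paths_def by (intro finite_PiE) auto

lemma paths_le: "s \<in> paths n B \<Longrightarrow> i \<le> n \<Longrightarrow> s i \<le> B"
  unfolding paths_def by auto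

lemma disjoint_family_cylinder: "disjoint_family_on (cylinder n) (paths n B)"
  unfolding disjoint_family_on_def
proof (intro ballI impI)
  fix s t assume "s \<in> paths n B" "t \<in> paths n B" "s \<noteq> t"
  then obtain i where "i \<in> {0..n}" "s i \<noteq> t i"
    unfolding paths_def by (metis PiE_ext)
  then show "cylinder n s \<inter> cylinder n t = {}"
    unfolding cylinder_def by auto
qed

lemma exceeding_null:
  assumes "m0 + n \<le> B"
  shows "{\<omega> \<in> space M. \<exists>i\<le>n. B < X i \<omega>} \<in> null_sets M"
proof -
  let ?S = "{s \<in> PiE {0..n} (\<lambda>_. UNIV). \<exists>i\<le>n. B < s i}"
  have "countable ?S"
    by (rule countable_subset[OF _ countable_PiE[of "{0..n}" "\<lambda>_. UNIV :: nat set"]]) auto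
  then have "(\<Union>s\<in>?S. cylinder n s) \<in> null_sets M"
  proof (rule null_sets_UN')
    fix s assume "s \<in> ?S"
    then obtain i where "i \<le> n" "B < s i"
      by blast
    then show "cylinder n s \<in> null_sets M"
      using assms by (intro cylinder_null_if_gt[of i]) auto
  qed
  moreover have "{\<omega> \<in> space M. \<exists>i\<le>n. B < X i \<omega>} \<subseteq> (\<Union>s\<in>?S. cylinder n s)"
  proof
    fix \<omega> assume \<omega>: "\<omega> \<in> {\<omega> \<in> space M. \<exists>i\<le>n. B < X i \<omega>}"
    then have "restrict (\<lambda>i. X i \<omega>) {0..n} \<in> ?S" and "\<omega> \<in> cylinder n (restrict (\<lambda>i. X i \<omega>) {0..n})"
      unfolding cylinder_def by auto
    then show "\<omega> \<in> (\<Union>s\<in>?S. cylinder n s)"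
      by blast
  qed
  moreover have "{\<omega> \<in> space M. \<exists>i\<le>n. B < X i \<omega>} \<in> events"
    by measurable
  ultimately show ?thesis
    using null_sets_subset by blast
qed

definition prefix_determined :: "nat \<Rightarrow> ((nat \<Rightarrow> nat) \<Rightarrow> bool) \<Rightarrow> bool" where
  "prefix_determined n Q \<longleftrightarrow> (\<forall>s t. (\<forall>i\<le>n. s i = t i) \<longrightarrow> Q s = Q t)"

lemma prefix_determinedD: "prefix_determined n Q \<Longrightarrow> \<forall>i\<le>n. s i = t i \<Longrightarrow> Q s = Q t"
  unfolding prefix_determined_def by blast

lemma prefix_determined_mono: "prefix_determined n Q \<Longrightarrow> n \<le> n' \<Longrightarrow> prefix_determined n' Q"
  unfolding prefix_determined_def by (meson order_trans)

lemma prefix_determined_const [simp]: "prefix_determined n (\<lambda>_. P)"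
  unfolding prefix_determined_def by simp

lemma prefix_determined_coord: "i \<le> n \<Longrightarrow> prefix_determined n (\<lambda>s. P (s i))"
  unfolding prefix_determined_def by auto

lemma prefix_determined_conj:
  "prefix_determined n P \<Longrightarrow> prefix_determined n Q \<Longrightarrow> prefix_determined n (\<lambda>s. P s \<and> Q s)"
  unfolding prefix_determined_def by meson

lemma prefix_determined_not: "prefix_determined n Q \<Longrightarrow> prefix_determined n (\<lambda>s. \<not> Q s)"
  unfolding prefix_determined_def by simp

lemma prefix_event_sets:
  assumes "prefix_determined n Q"
  shows "{\<omega> \<in> space M. Q (\<lambda>i. X i \<omega>)} \<in> events"
proof -
  let ?S = "{s \<in> PiE {0..n} (\<lambda>_. UNIV). Q s}"
  have countable: "countable ?S"
    by (rule countable_subset[OF _ countable_PiE[of "{0..n}" "\<lambda>_. UNIV :: nat set"]]) auto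
  have eq: "{\<omega> \<in> space M. Q (\<lambda>i. X i \<omega>)} = (\<Union>s\<in>?S. cylinder n s)"
  proof (intro set_eqI iffI)
    fix \<omega> assume \<omega>: "\<omega> \<in> {\<omega> \<in> space M. Q (\<lambda>i. X i \<omega>)}"
    let ?s = "restrict (\<lambda>i. X i \<omega>) {0..n}"
    have "Q ?s = Q (\<lambda>i. X i \<omega>)"
      by (rule prefix_determinedD[OF assms]) simp
    then have "?s \<in> ?S"
      using \<omega> by auto
    moreover have "\<omega> \<in> cylinder n ?s"
      using \<omega> unfolding cylinder_def by auto
    ultimately show "\<omega> \<in> (\<Union>s\<in>?S. cylinder n s)"
      by blast
  next
    fix \<omega> assume "\<omega> \<in> (\<Union>s\<in>?S. cylinder n s)"
    then obtain s where s: "s \<in> ?S" "\<omega> \<in> cylinder n s"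
      by blast
    then have "Q (\<lambda>i. X i \<omega>) = Q s"
      by (intro prefix_determinedD[OF assms]) (simp add: cylinder_def)
    then show "\<omega> \<in> {\<omega> \<in> space M. Q (\<lambda>i. X i \<omega>)}"
      using s unfolding cylinder_def by auto
  qed
  show ?thesis
    unfolding eq by (rule sets.countable_UN'[OF countable]) auto
qed

lemma prob_Union_cylinders:
  assumes "T \<subseteq> paths n B"
  shows "prob (\<Union>s\<in>T. cylinder n s) = (\<Sum>s\<in>T. path_prob n s)"
proof -
  have "finite T"
    using assms finite_paths finite_subset by blast
  then show ?thesis
    unfolding path_prob_def
    by (rule measure_finite_Union)
       (use assms disjoint_family_on_mono[OF assms disjoint_family_cylinder] in
        \<open>auto simp: emeasure_eq_measure\<close>)
qed

text \<open>Up to a null set, an event determined by the first \<open>n\<close> steps is a finite union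
  of cylinders, since the chain cannot exceed \<open>m0 + n\<close> by time \<open>n\<close>.\<close>

lemma prob_prefix_event:
  assumes Q: "prefix_determined n Q" and B: "m0 + n \<le> B"
  shows "prob {\<omega> \<in> space M. Q (\<lambda>i. X i \<omega>)} = (\<Sum>s\<in>paths n B. if Q s then path_prob n s else 0)"
proof -
  let ?E = "{\<omega> \<in> space M. Q (\<lambda>i. X i \<omega>)}"
  let ?U = "\<Union>s\<in>{s \<in> paths n B. Q s}. cylinder n s"
  let ?Bad = "{\<omega> \<in> space M. \<exists>i\<le>n. B < X i \<omega>}"
  have U: "?U \<in> events"
    using finite_paths by (intro sets.finite_UN) auto
  have Bad: "?Bad \<in> null_sets M"
    by (rule exceeding_null[OF B])
  have "?U \<subseteq> ?E"
  proof
    fix \<omega> assume "\<omega> \<in> ?U"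
    then obtain s where s: "s \<in> paths n B" "Q s" "\<omega> \<in> cylinder n s"
      by blast
    then have "Q (\<lambda>i. X i \<omega>) = Q s"
      by (intro prefix_determinedD[OF Q]) (simp add: cylinder_def)
    then show "\<omega> \<in> ?E"
      using s unfolding cylinder_def by auto
  qed
  then have "prob ?U \<le> prob ?E"
    by (rule finite_measure_mono) (rule prefix_event_sets[OF Q])
  moreover have "?E \<subseteq> ?U \<union> ?Bad"
  proof
    fix \<omega> assume \<omega>: "\<omega> \<in> ?E"
    let ?s = "restrict (\<lambda>i. X i \<omega>) {0..n}"
    show "\<omega> \<in> ?U \<union> ?Bad"
    proof (cases "\<omega> \<in> ?Bad")
      case False
      have "Q ?s = Q (\<lambda>i. X i \<omega>)"
        by (rule prefix_determinedD[OF Q]) simp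
      moreover have "?s \<in> paths n B"
        using False \<omega> unfolding paths_def by (auto simp: not_less)
      moreover have "\<omega> \<in> cylinder n ?s"
        using \<omega> unfolding cylinder_def by auto
      ultimately show ?thesis
        using \<omega> by blast
    qed simp
  qed
  then have "prob ?E \<le> prob (?U \<union> ?Bad)"
    by (rule finite_measure_mono) (use U Bad in auto)
  moreover have "prob (?U \<union> ?Bad) = prob ?U"
    by (rule measure_Un_null_set[OF U Bad])
  ultimately have "prob ?E = prob ?U"
    by linarith
  also have "\<dots> = (\<Sum>s\<in>{s \<in> paths n B. Q s}. path_prob n s)"
    by (rule prob_Union_cylinders) auto
  also have "\<dots> = (\<Sum>s\<in>paths n B. if Q s then path_prob n s else 0)"
    by (simp add: sum.inter_filter[OF finite_paths])
  finally show ?thesis .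
qed

lemma sum_paths_Suc:
  "(\<Sum>s\<in>paths (Suc n) B. f s) = (\<Sum>g\<in>paths n B. \<Sum>y=0..B. f (g(Suc n := y)))"
proof -
  have paths_Suc: "paths (Suc n) B = (\<lambda>(y, g). g(Suc n := y)) ` ({0..B} \<times> paths n B)"
  proof -
    have "{0..Suc n} = insert (Suc n) {0..n}"
      by auto
    then show ?thesis
      unfolding paths_def by (simp add: PiE_insert_eq)
  qed
  have inj: "inj_on (\<lambda>(y, g). g(Suc n := y)) ({0..B} \<times> paths n B)"
    unfolding paths_def by (rule inj_combinator) simp
  have "(\<Sum>s\<in>paths (Suc n) B. f s) = (\<Sum>(y, g)\<in>{0..B} \<times> paths n B. f (g(Suc n := y)))"
    unfolding paths_Suc by (subst sum.reindex[OF inj]) (simp add: case_prod_unfold)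
  also have "\<dots> = (\<Sum>y=0..B. \<Sum>g\<in>paths n B. f (g(Suc n := y)))"
    by (rule sum.cartesian_product[symmetric])
  also have "\<dots> = (\<Sum>g\<in>paths n B. \<Sum>y=0..B. f (g(Suc n := y)))"
    by (rule sum.swap)
  finally show ?thesis .
qed

lemma sum_paths_split_state:
  fixes f :: "nat \<Rightarrow> real"
  assumes "s \<in> paths n B"
  shows "(\<Sum>m=0..B. if Q s \<and> s n = m then f m else 0) = (if Q s then f (s n) else 0)"
  using paths_le[OF assms, of n] by (cases "Q s") (simp_all add: sum.delta)

lemma prob_split_state:
  assumes Q: "prefix_determined n Q" and B: "m0 + n \<le> B"
  shows "prob {\<omega> \<in> space M. Q (\<lambda>i. X i \<omega>)} =
    (\<Sum>m=0..B. prob {\<omega> \<in> space M. Q (\<lambda>i. X i \<omega>) \<and> X n \<omega> = m})"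
proof -
  have "prob {\<omega> \<in> space M. Q (\<lambda>i. X i \<omega>) \<and> X n \<omega> = m} =
      (\<Sum>s\<in>paths n B. if Q s \<and> s n = m then path_prob n s else 0)" for m
  proof -
    have "prefix_determined n (\<lambda>s. Q s \<and> s n = m)"
      by (intro prefix_determined_conj Q prefix_determined_coord) simp
    from prob_prefix_event[OF this B] show ?thesis
      by simp
  qed
  then have "(\<Sum>m=0..B. prob {\<omega> \<in> space M. Q (\<lambda>i. X i \<omega>) \<and> X n \<omega> = m}) =
      (\<Sum>s\<in>paths n B. \<Sum>m=0..B. if Q s \<and> s n = m then path_prob n s else 0)"
    by (simp add: sum.swap[of _ "{0..B}"])
  also have "\<dots> = (\<Sum>s\<in>paths n B. if Q s then path_prob n s else 0)"
    by (intro sum.cong refl) (simp add: sum_paths_split_state paths_le)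
  also have "\<dots> = prob {\<omega> \<in> space M. Q (\<lambda>i. X i \<omega>)}"
    by (rule prob_prefix_event[OF Q B, symmetric])
  finally show ?thesis
    by simp
qed

lemma prob_step:
  assumes Q: "prefix_determined n Q" and B: "m0 + Suc n \<le> B" "m' \<le> B"
  shows "prob {\<omega> \<in> space M. Q (\<lambda>i. X i \<omega>) \<and> X (Suc n) \<omega> = m'} =
    (\<Sum>m=0..B. prob {\<omega> \<in> space M. Q (\<lambda>i. X i \<omega>) \<and> X n \<omega> = m} * bmc_trans m m')"
proof -
  have Q_upd: "Q (g(Suc n := y)) = Q g" for g y
    by (rule prefix_determinedD[OF Q]) simp
  have path_prob_upd: "path_prob (Suc n) (g(Suc n := y)) = path_prob n g * bmc_trans (g n) y" for g y
  proof -
    have "cylinder n (g(Suc n := y)) = cylinder n g"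
      by (rule cylinder_cong) simp
    then show ?thesis
      unfolding path_prob_Suc by (simp add: path_prob_def)
  qed
  have "prob {\<omega> \<in> space M. Q (\<lambda>i. X i \<omega>) \<and> X (Suc n) \<omega> = m'} =
      (\<Sum>s\<in>paths (Suc n) B. if Q s \<and> s (Suc n) = m' then path_prob (Suc n) s else 0)"
  proof -
    have "prefix_determined (Suc n) (\<lambda>s. Q s \<and> s (Suc n) = m')"
      by (intro prefix_determined_conj prefix_determined_mono[OF Q] prefix_determined_coord) simp_all
    from prob_prefix_event[OF this B(1)] show ?thesis
      by simp
  qed
  also have "\<dots> = (\<Sum>g\<in>paths n B. \<Sum>y=0..B. if y = m' then (if Q g then path_prob n g * bmc_trans (g n) y else 0) else 0)"
    unfolding sum_paths_Suc by (intro sum.cong refl) (simp add: Q_upd path_prob_upd)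
  also have "\<dots> = (\<Sum>g\<in>paths n B. if Q g then path_prob n g * bmc_trans (g n) m' else 0)"
    using B(2) by (simp add: sum.delta')
  also have "\<dots> = (\<Sum>g\<in>paths n B. \<Sum>m=0..B. if Q g \<and> g n = m then path_prob n g * bmc_trans m m' else 0)"
    by (intro sum.cong refl) (simp add: sum_paths_split_state paths_le)
  also have "\<dots> = (\<Sum>m=0..B. \<Sum>g\<in>paths n B. if Q g \<and> g n = m then path_prob n g * bmc_trans m m' else 0)"
    by (rule sum.swap)
  also have "\<dots> = (\<Sum>m=0..B. prob {\<omega> \<in> space M. Q (\<lambda>i. X i \<omega>) \<and> X n \<omega> = m} * bmc_trans m m')"
  proof (rule sum.cong[OF refl])
    fix m
    have "prefix_determined n (\<lambda>s. Q s \<and> s n = m)"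
      by (intro prefix_determined_conj Q prefix_determined_coord) simp
    moreover have "m0 + n \<le> B"
      using B(1) by simp
    ultimately have "prob {\<omega> \<in> space M. Q (\<lambda>i. X i \<omega>) \<and> X n \<omega> = m} =
        (\<Sum>g\<in>paths n B. if Q g \<and> g n = m then path_prob n g else 0)"
      by (subst prob_prefix_event) simp_all
    then show "(\<Sum>g\<in>paths n B. if Q g \<and> g n = m then path_prob n g * bmc_trans m m' else 0) =
        prob {\<omega> \<in> space M. Q (\<lambda>i. X i \<omega>) \<and> X n \<omega> = m} * bmc_trans m m'"
      by (auto simp: sum_distrib_right intro!: sum.cong)
  qed
  finally show ?thesis .
qed

end

section \<open>Decay of the mean potential\<close>

lemma power4_weighted_mean_le:
  fixes p x :: "'b \<Rightarrow> real"
  assumes "finite S" "\<And>i. i \<in> S \<Longrightarrow> p i \<ge> 0" "(\<Sum>i\<in>S. p i) = 1"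
  shows "(\<Sum>i\<in>S. p i * x i) ^ 4 \<le> (\<Sum>i\<in>S. p i * x i ^ 4)"
proof -
  have "S \<noteq> {}"
    using assms(3) by auto
  from convex_on_sum[OF assms(1) this convex_power_even[of 4] assms(3,2)]
  show ?thesis
    by simp
qed

lemma inverse_cube_increment:
  fixes u v :: real
  assumes u: "0 < u" "u \<le> 1" and v: "0 < v" "v \<le> u - u^4 / 48"
  shows "1 / u^3 + 1/16 \<le> 1 / v^3"
proof -
  define x where "x = u^3 / 48"
  have x: "0 < x" "x \<le> 1/48"
    using u by (simp_all add: x_def power_le_one)
  have "v \<le> u * (1 - x)"
    using v by (simp add: x_def algebra_simps power3_eq_cube power4_eq_xxxx)
  then have "v^3 \<le> (u * (1 - x))^3"
    by (rule power_mono) (use v in simp)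
  then have v3: "v^3 \<le> u^3 * (1 - x)^3"
    by (simp add: power_mult_distrib)
  have "(1 - x)^3 * (1 + 3*x) = 1 - x^2 * (6 - 8*x + 3*x^2)"
    by (simp add: power2_eq_square power3_eq_cube algebra_simps)
  moreover have "x^2 * (6 - 8*x + 3*x^2) \<ge> 0"
    using x by (intro mult_nonneg_nonneg) auto
  ultimately have poly: "(1 - x)^3 * (1 + 3*x) \<le> 1"
    by linarith
  have "v^3 * (1 + 3*x) \<le> u^3 * ((1 - x)^3 * (1 + 3*x))"
    using v3 x by (simp add: mult_right_mono mult.assoc[symmetric])
  also have "\<dots> \<le> u^3"
    using poly u by (simp add: mult_left_le)
  finally have "v^3 * (1 + 3*x) \<le> u^3" .
  then have "(1 + 3*x) / u^3 \<le> 1 / v^3"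
    using u v by (simp add: divide_simps mult.commute)
  moreover have "1 / u^3 + 1/16 = (1 + 3*x) / u^3"
    using u by (simp add: x_def field_simps)
  ultimately show ?thesis
    by simp
qed

context boundary_chain
begin

definition state_prob :: "nat \<Rightarrow> nat \<Rightarrow> real" where
  "state_prob n m = prob {\<omega> \<in> space M. X n \<omega> = m}"

lemma state_prob_nonneg: "state_prob n m \<ge> 0"
  unfolding state_prob_def by simp

lemma state_prob_eq_0: "m0 + n < m \<Longrightarrow> state_prob n m = 0"
proof -
  assume m: "m0 + n < m"
  have "{\<omega> \<in> space M. X n \<omega> = m} \<subseteq> {\<omega> \<in> space M. \<exists>i\<le>n. m0 + n < X i \<omega>}"
    using m by auto
  moreover have "{\<omega> \<in> space M. X n \<omega> = m} \<in> events"
    by measurable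
  ultimately have "{\<omega> \<in> space M. X n \<omega> = m} \<in> null_sets M"
    using null_sets_subset[OF exceeding_null[of n "m0 + n"]] by simp
  then show ?thesis
    unfolding state_prob_def by (simp add: measure_eq_0_null_sets)
qed

lemma sum_state_prob_extend:
  "m0 + n \<le> B \<Longrightarrow> (\<Sum>m=0..B. state_prob n m * f m) = (\<Sum>m=0..m0+n. state_prob n m * f m)"
  by (rule sum.mono_neutral_right) (auto simp: state_prob_eq_0)

lemma sum_state_prob: "(\<Sum>m=0..m0+n. state_prob n m) = 1"
  using prob_split_state[of n "\<lambda>_. True" "m0 + n"] prob_space
  unfolding state_prob_def by simp

lemma state_prob_Suc:
  "m0 + Suc n \<le> B \<Longrightarrow> m' \<le> B \<Longrightarrow> state_prob (Suc n) m' = (\<Sum>m=0..B. state_prob n m * bmc_trans m m')"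
  using prob_step[of n "\<lambda>_. True" B m'] unfolding state_prob_def by simp

definition mean_potential :: "nat \<Rightarrow> real" where
  "mean_potential n = (\<Sum>m=0..m0+n. state_prob n m * potential m)"

lemma mean_potential_pos: "mean_potential n > 0"
proof -
  have "0 < potential (m0 + n)"
    by simp
  also have "\<dots> = (\<Sum>m=0..m0+n. state_prob n m * potential (m0 + n))"
    by (simp add: sum_distrib_right[symmetric] sum_state_prob)
  also have "\<dots> \<le> mean_potential n"
    unfolding mean_potential_def
    by (intro sum_mono mult_left_mono potential_antimono) (auto simp: state_prob_nonneg)
  finally show ?thesis .
qed

lemma mean_potential_le_one: "mean_potential n \<le> 1"
proof -
  have "mean_potential n \<le> (\<Sum>m=0..m0+n. state_prob n m * 1)"
    unfolding mean_potential_def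
    by (intro sum_mono mult_left_mono potential_le_one) (simp add: state_prob_nonneg)
  then show ?thesis
    using sum_state_prob[of n] by simp
qed

lemma mean_potential_Suc:
  "mean_potential (Suc n) = (\<Sum>m=0..m0+n. state_prob n m *
     (potential m * (1 - central_binomial_prob m / (3 * (real m + 1)))))"
proof -
  define B where "B = m0 + Suc n"
  have "mean_potential (Suc n) = (\<Sum>m'=0..B. state_prob (Suc n) m' * potential m')"
    by (simp only: mean_potential_def B_def)
  also have "\<dots> = (\<Sum>m'=0..B. \<Sum>m=0..B. state_prob n m * bmc_trans m m' * potential m')"
  proof (rule sum.cong[OF refl])
    fix m' assume "m' \<in> {0..B}"
    then have "state_prob (Suc n) m' = (\<Sum>m=0..B. state_prob n m * bmc_trans m m')"
      by (intro state_prob_Suc) (auto simp: B_def)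
    then show "state_prob (Suc n) m' * potential m' =
        (\<Sum>m=0..B. state_prob n m * bmc_trans m m' * potential m')"
      by (simp add: sum_distrib_right)
  qed
  also have "\<dots> = (\<Sum>m=0..B. state_prob n m * (\<Sum>m'=0..B. bmc_trans m m' * potential m'))"
    by (subst sum.swap) (simp add: sum_distrib_left mult.assoc)
  also have "\<dots> = (\<Sum>m=0..m0+n. state_prob n m * (\<Sum>m'=0..B. bmc_trans m m' * potential m'))"
    by (rule sum_state_prob_extend) (simp add: B_def)
  also have "\<dots> = (\<Sum>m=0..m0+n. state_prob n m *
      (potential m * (1 - central_binomial_prob m / (3 * (real m + 1)))))"
  proof (rule sum.cong[OF refl])
    fix m assume "m \<in> {0..m0+n}"
    then have "Suc m \<le> B"
      by (simp add: B_def)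
    then show "state_prob n m * (\<Sum>m'=0..B. bmc_trans m m' * potential m') =
        state_prob n m * (potential m * (1 - central_binomial_prob m / (3 * (real m + 1))))"
      by (simp add: bmc_trans_potential_sum)
  qed
  finally show ?thesis .
qed

lemma mean_potential_Suc_le: "mean_potential (Suc n) \<le> mean_potential n - mean_potential n ^ 4 / 48"
proof -
  have "mean_potential (Suc n) \<le> (\<Sum>m=0..m0+n. state_prob n m * (potential m - potential m ^ 4 / 48))"
    unfolding mean_potential_Suc
  proof (intro sum_mono mult_left_mono)
    fix m
    have "potential m * (potential m ^ 3 / 48) \<le>
        potential m * (central_binomial_prob m / (3 * (real m + 1)))"
      by (rule mult_left_mono[OF potential_cube_le]) (simp add: less_imp_le)
    then show "potential m * (1 - central_binomial_prob m / (3 * (real m + 1))) \<le>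
        potential m - potential m ^ 4 / 48"
      by (simp add: algebra_simps power3_eq_cube power4_eq_xxxx)
  qed (simp add: state_prob_nonneg)
  also have "\<dots> = mean_potential n - (\<Sum>m=0..m0+n. state_prob n m * potential m ^ 4) / 48"
    unfolding mean_potential_def by (simp add: algebra_simps sum_subtractf sum_divide_distrib)
  also have "\<dots> \<le> mean_potential n - mean_potential n ^ 4 / 48"
    using power4_weighted_mean_le[of "{0..m0+n}" "state_prob n" potential]
    by (simp add: mean_potential_def state_prob_nonneg sum_state_prob)
  finally show ?thesis .
qed

lemma inverse_mean_potential_cube_ge: "real n / 16 \<le> 1 / mean_potential n ^ 3"
proof (induction n)
  case 0
  then show ?case
    using mean_potential_pos[of 0] by simp
next
  case (Suc n)
  have "1 / mean_potential n ^ 3 + 1/16 \<le> 1 / mean_potential (Suc n) ^ 3"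
    by (rule inverse_cube_increment)
       (use mean_potential_pos mean_potential_le_one mean_potential_Suc_le in auto)
  then show ?case
    using Suc by simp
qed

lemma mean_potential_block_le: "mean_potential (8^j) \<le> 3 / 2^j"
proof -
  have "mean_potential (8^j) ^ 3 \<le> 16 / real (8^j)"
    using inverse_mean_potential_cube_ge[of "8^j"] mean_potential_pos[of "8^j"]
    by (simp add: divide_simps mult.commute)
  also have "\<dots> \<le> 27 / 8^j"
    by (simp add: divide_right_mono)
  also have "\<dots> = (3 / 2^j)^3"
  proof -
    have "((2::real)^j)^3 = (2^3)^j"
      by (simp only: power_mult[symmetric] mult.commute)
    then have "((2::real)^j)^3 = 8^j"
      by simp
    then show ?thesis
      by (simp add: power_divide)
  qed
  finally show ?thesis
    by (subst (asm) power_mono_iff) (use mean_potential_pos[of "8^j"] in auto)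
qed

end

section \<open>A maximal inequality\<close>

definition stays_above :: "nat \<Rightarrow> nat \<Rightarrow> nat \<Rightarrow> (nat \<Rightarrow> nat) \<Rightarrow> bool" where
  "stays_above N a k s \<longleftrightarrow> (\<forall>t. N \<le> t \<and> t \<le> N + k \<longrightarrow> a < s t)"

lemma stays_above_0: "stays_above N a 0 s \<longleftrightarrow> a < s N"
  unfolding stays_above_def by (metis add_0_right le_antisym order_refl)

lemma stays_above_Suc: "stays_above N a (Suc k) s \<longleftrightarrow> stays_above N a k s \<and> a < s (Suc (N + k))"
  unfolding stays_above_def by (auto simp: le_Suc_eq)

context boundary_chain
begin

lemma prefix_determined_stays_above: "prefix_determined (N + k) (stays_above N a k)"
  unfolding prefix_determined_def stays_above_def by auto

definition survival_prob :: "nat \<Rightarrow> nat \<Rightarrow> nat \<Rightarrow> nat \<Rightarrow> real" where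
  "survival_prob N a k m =
     prob {\<omega> \<in> space M. stays_above N a k (\<lambda>i. X i \<omega>) \<and> X (N + k) \<omega> = m}"

definition dip_prob :: "nat \<Rightarrow> nat \<Rightarrow> nat \<Rightarrow> real" where
  "dip_prob N a k = prob {\<omega> \<in> space M. \<not> stays_above N a k (\<lambda>i. X i \<omega>)}"

text \<open>A lower bound for the mean potential of the chain stopped at the first time \<open>t \<ge> N\<close>
  with \<open>M\<^sub>t \<le> a\<close>: stopped paths are credited with \<open>potential a\<close> only. The sum is the
  full expectation only if \<open>B \<ge> m0 + N + k\<close> bounds the states reachable by time \<open>N + k\<close>.\<close>

definition stopped_potential :: "nat \<Rightarrow> nat \<Rightarrow> nat \<Rightarrow> nat \<Rightarrow> real" where
  "stopped_potential B N a k =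
     (\<Sum>m=0..B. survival_prob N a k m * potential m) + potential a * dip_prob N a k"

lemma survival_prob_nonneg: "survival_prob N a k m \<ge> 0"
  unfolding survival_prob_def by simp

lemma stopped_potential_0_le:
  assumes B: "m0 + N \<le> B"
  shows "stopped_potential B N a 0 \<le> mean_potential N"
proof -
  have survival: "survival_prob N a 0 m = (if a < m then state_prob N m else 0)" for m
  proof -
    have "{\<omega> \<in> space M. stays_above N a 0 (\<lambda>i. X i \<omega>) \<and> X (N + 0) \<omega> = m} =
        (if a < m then {\<omega> \<in> space M. X N \<omega> = m} else {})"
      unfolding stays_above_0 by auto
    then show ?thesis
      unfolding survival_prob_def state_prob_def by simp
  qed
  have dip: "dip_prob N a 0 = (\<Sum>m=0..B. if m \<le> a then state_prob N m else 0)"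
  proof -
    have "prefix_determined N (\<lambda>s. \<not> stays_above N a 0 s)"
      using prefix_determined_not[OF prefix_determined_stays_above[of N 0 a]] by simp
    from prob_split_state[OF this B]
    have "dip_prob N a 0 =
        (\<Sum>m=0..B. prob {\<omega> \<in> space M. \<not> stays_above N a 0 (\<lambda>i. X i \<omega>) \<and> X N \<omega> = m})"
      unfolding dip_prob_def .
    also have "\<dots> = (\<Sum>m=0..B. if m \<le> a then state_prob N m else 0)"
    proof (rule sum.cong[OF refl])
      fix m
      have "{\<omega> \<in> space M. \<not> stays_above N a 0 (\<lambda>i. X i \<omega>) \<and> X N \<omega> = m} =
          (if m \<le> a then {\<omega> \<in> space M. X N \<omega> = m} else {})"
        unfolding stays_above_0 by auto
      then show "prob {\<omega> \<in> space M. \<not> stays_above N a 0 (\<lambda>i. X i \<omega>) \<and> X N \<omega> = m} =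
          (if m \<le> a then state_prob N m else 0)"
        unfolding state_prob_def by simp
    qed
    finally show ?thesis .
  qed
  have "stopped_potential B N a 0 =
      (\<Sum>m=0..B. state_prob N m * (if a < m then potential m else potential a))"
    unfolding stopped_potential_def survival dip sum_distrib_left sum.distrib[symmetric]
    by (rule sum.cong) auto
  also have "\<dots> \<le> (\<Sum>m=0..B. state_prob N m * potential m)"
    by (intro sum_mono mult_left_mono) (auto simp: state_prob_nonneg intro: potential_antimono)
  also have "\<dots> = mean_potential N"
    unfolding mean_potential_def by (rule sum_state_prob_extend[OF B])
  finally show ?thesis .
qed

lemma survival_prob_Suc:
  assumes "m0 + Suc (N + k) \<le> B" "m' \<le> B"
  shows "survival_prob N a (Suc k) m' =
    (if a < m' then \<Sum>m=0..B. survival_prob N a k m * bmc_trans m m' else 0)"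
proof -
  have "{\<omega> \<in> space M. stays_above N a (Suc k) (\<lambda>i. X i \<omega>) \<and> X (N + Suc k) \<omega> = m'} =
      (if a < m' then {\<omega> \<in> space M. stays_above N a k (\<lambda>i. X i \<omega>) \<and> X (Suc (N + k)) \<omega> = m'}
       else {})"
    unfolding stays_above_Suc by auto
  moreover have "prob {\<omega> \<in> space M. stays_above N a k (\<lambda>i. X i \<omega>) \<and> X (Suc (N + k)) \<omega> = m'} =
      (\<Sum>m=0..B. survival_prob N a k m * bmc_trans m m')"
    unfolding survival_prob_def by (rule prob_step[OF prefix_determined_stays_above assms])
  ultimately show ?thesis
    unfolding survival_prob_def by simp
qed

lemma dip_prob_Suc:
  assumes B: "m0 + Suc (N + k) \<le> B"
  shows "dip_prob N a (Suc k) = dip_prob N a k +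
    (\<Sum>m'=0..B. if m' \<le> a then \<Sum>m=0..B. survival_prob N a k m * bmc_trans m m' else 0)"
proof -
  let ?A = "{\<omega> \<in> space M. \<not> stays_above N a k (\<lambda>i. X i \<omega>)}"
  let ?B = "{\<omega> \<in> space M. stays_above N a k (\<lambda>i. X i \<omega>) \<and> \<not> a < X (Suc (N + k)) \<omega>}"
  have A: "prefix_determined (N + k) (\<lambda>s. \<not> stays_above N a k s)"
    by (rule prefix_determined_not[OF prefix_determined_stays_above])
  have B': "prefix_determined (Suc (N + k)) (\<lambda>s. stays_above N a k s \<and> \<not> a < s (Suc (N + k)))"
    by (intro prefix_determined_conj prefix_determined_mono[OF prefix_determined_stays_above]
        prefix_determined_coord) auto
  have "{\<omega> \<in> space M. \<not> stays_above N a (Suc k) (\<lambda>i. X i \<omega>)} = ?A \<union> ?B"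
    unfolding stays_above_Suc by auto
  moreover have "?B \<in> events"
    using prefix_event_sets[OF B'] by simp
  ultimately have "dip_prob N a (Suc k) = prob ?A + prob ?B"
    unfolding dip_prob_def using prefix_event_sets[OF A] by (auto intro: finite_measure_Union)
  also have "prob ?B = (\<Sum>m'=0..B. prob {\<omega> \<in> space M.
      (stays_above N a k (\<lambda>i. X i \<omega>) \<and> \<not> a < X (Suc (N + k)) \<omega>) \<and> X (Suc (N + k)) \<omega> = m'})"
    using prob_split_state[OF B' B] by simp
  also have "\<dots> = (\<Sum>m'=0..B. if m' \<le> a then \<Sum>m=0..B. survival_prob N a k m * bmc_trans m m' else 0)"
  proof (rule sum.cong[OF refl])
    fix m' assume "m' \<in> {0..B}"
    then have "prob {\<omega> \<in> space M. stays_above N a k (\<lambda>i. X i \<omega>) \<and> X (Suc (N + k)) \<omega> = m'} =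
        (\<Sum>m=0..B. survival_prob N a k m * bmc_trans m m')"
      unfolding survival_prob_def by (intro prob_step[OF prefix_determined_stays_above B]) simp
    moreover have "{\<omega> \<in> space M. (stays_above N a k (\<lambda>i. X i \<omega>) \<and> \<not> a < X (Suc (N + k)) \<omega>) \<and>
          X (Suc (N + k)) \<omega> = m'} =
        (if m' \<le> a then {\<omega> \<in> space M. stays_above N a k (\<lambda>i. X i \<omega>) \<and> X (Suc (N + k)) \<omega> = m'}
         else {})"
      by auto
    ultimately show "prob {\<omega> \<in> space M. (stays_above N a k (\<lambda>i. X i \<omega>) \<and> \<not> a < X (Suc (N + k)) \<omega>) \<and>
          X (Suc (N + k)) \<omega> = m'} =
        (if m' \<le> a then \<Sum>m=0..B. survival_prob N a k m * bmc_trans m m' else 0)"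
      by simp
  qed
  finally show ?thesis
    unfolding dip_prob_def .
qed

text \<open>The optional stopping step: a path that dips at time \<open>N + k + 1\<close> is now credited
  with \<open>potential a \<le> potential m'\<close>, and the rest is the superharmonicity of the potential.\<close>

lemma stopped_potential_Suc_le:
  assumes B: "m0 + Suc (N + k) \<le> B"
  shows "stopped_potential B N a (Suc k) \<le> stopped_potential B N a k"
proof -
  define G where "G m' = (\<Sum>m=0..B. survival_prob N a k m * bmc_trans m m')" for m'
  have G_nonneg: "0 \<le> G m'" for m'
    unfolding G_def by (intro sum_nonneg mult_nonneg_nonneg survival_prob_nonneg bmc_trans_nonneg)
  have survival: "(\<Sum>m'=0..B. survival_prob N a (Suc k) m' * potential m') =
      (\<Sum>m'=0..B. (if a < m' then G m' else 0) * potential m')"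
    using survival_prob_Suc[OF B] by (intro sum.cong refl) (simp add: G_def)
  have "(\<Sum>m'=0..B. G m' * (if a < m' then potential m' else potential a)) =
      (\<Sum>m'=0..B. (if a < m' then G m' else 0) * potential m') +
      potential a * (\<Sum>m'=0..B. if m' \<le> a then G m' else 0)"
    unfolding sum_distrib_left sum.distrib[symmetric] by (rule sum.cong) auto
  then have "stopped_potential B N a (Suc k) =
      potential a * dip_prob N a k + (\<Sum>m'=0..B. G m' * (if a < m' then potential m' else potential a))"
    unfolding stopped_potential_def survival dip_prob_Suc[OF B] G_def[symmetric]
    by (simp add: algebra_simps)
  also have "\<dots> \<le> potential a * dip_prob N a k + (\<Sum>m'=0..B. G m' * potential m')"
    by (intro add_left_mono sum_mono mult_left_mono) (auto simp: G_nonneg intro: potential_antimono)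
  also have "(\<Sum>m'=0..B. G m' * potential m') =
      (\<Sum>m=0..B. survival_prob N a k m * (\<Sum>m'=0..B. bmc_trans m m' * potential m'))"
    unfolding G_def sum_distrib_right sum_distrib_left by (subst sum.swap) (simp add: mult.assoc)
  also have "\<dots> \<le> (\<Sum>m=0..B. survival_prob N a k m * potential m)"
    by (intro sum_mono mult_left_mono bmc_trans_potential_sum_le survival_prob_nonneg)
  finally show ?thesis
    unfolding stopped_potential_def by linarith
qed

lemma maximal_inequality:
  "potential a * prob {\<omega> \<in> space M. \<exists>t. N \<le> t \<and> t \<le> N + K \<and> X t \<omega> \<le> a} \<le> mean_potential N"
proof -
  define B where "B = m0 + N + K + 1"
  have "stopped_potential B N a k \<le> mean_potential N" if "k \<le> K" for k
    using that
  proof (induction k)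
    case 0
    then show ?case
      by (intro stopped_potential_0_le) (simp add: B_def)
  next
    case (Suc k)
    then have "stopped_potential B N a (Suc k) \<le> stopped_potential B N a k"
      by (intro stopped_potential_Suc_le) (simp add: B_def)
    with Suc show ?case
      by simp
  qed
  moreover have "potential a * dip_prob N a K \<le> stopped_potential B N a K"
    unfolding stopped_potential_def
    by (simp add: sum_nonneg survival_prob_nonneg less_imp_le[OF potential_pos])
  moreover have "{\<omega> \<in> space M. \<exists>t. N \<le> t \<and> t \<le> N + K \<and> X t \<omega> \<le> a} =
      {\<omega> \<in> space M. \<not> stays_above N a K (\<lambda>i. X i \<omega>)}"
    unfolding stays_above_def by (auto simp: not_less)
  ultimately show ?thesis
    unfolding dip_prob_def by (metis order_refl order_trans)
qed

end

section \<open>Borel--Cantelli over the blocks [8^j, 8^(j+1)]\<close>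

definition block_threshold :: "real \<Rightarrow> nat \<Rightarrow> nat \<Rightarrow> real" where
  "block_threshold \<epsilon> c j = real c * 4^(j+1) / real j powr (2 + \<epsilon>)"

lemma block_threshold_nonneg: "block_threshold \<epsilon> c j \<ge> 0"
  by (simp add: block_threshold_def)

lemma powr_two_thirds_le:
  assumes "1 \<le> n" "real n \<le> 8^(j+1)"
  shows "real n powr (2/3) \<le> 4^(j+1)"
proof -
  have "(real n powr (2/3))^3 = real n powr (of_nat 3 * (2/3))"
    by (rule powr_power) (use assms in simp)
  also have "\<dots> = real n ^ 2"
    using assms by simp
  also have "\<dots> \<le> (8^(j+1))^2"
    by (rule power_mono[OF assms(2)]) simp
  also have "\<dots> = ((4::real)^(j+1))^3"
  proof -
    have "((8::real)^(j+1))^2 = (8^2)^(j+1)" "((4::real)^(j+1))^3 = (4^3)^(j+1)"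
      by (simp_all only: power_mult[symmetric] mult.commute)
    then show ?thesis
      by simp
  qed
  finally show ?thesis
    by (subst (asm) power_mono_iff) auto
qed

lemma block_threshold_le_imp_growth:
  fixes x \<epsilon> :: real and c j n :: nat
  assumes "\<epsilon> > 0" "1 \<le> j" "8^j \<le> n" "n \<le> 8^(j+1)" and x: "block_threshold \<epsilon> c j \<le> x"
  shows "real c \<le> x * ln (real n) powr (2 + \<epsilon>) / real n powr (2/3)"
proof -
  have n: "1 \<le> n"
    using assms(3) by (metis le_trans one_le_numeral one_le_power)
  have "1 \<le> ln (8::real)"
    using ln_ge_iff[of 8 1] exp_le by simp
  then have "real j \<le> real j * ln 8"
    by (simp add: mult_le_cancel_left1)
  also have "\<dots> = ln (8 ^ j)"
    by (simp add: ln_realpow)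
  also have "\<dots> \<le> ln (real n)"
  proof -
    have "(8::real)^j \<le> real n"
      using assms(3) by (metis of_nat_le_iff of_nat_numeral of_nat_power)
    then show ?thesis
      using n by (subst ln_le_cancel_iff) auto
  qed
  finally have L: "real j powr (2 + \<epsilon>) \<le> ln (real n) powr (2 + \<epsilon>)"
    by (intro powr_mono2) (use assms in auto)
  have Q: "real n powr (2/3) \<le> 4^(j+1)"
  proof (rule powr_two_thirds_le[OF n])
    show "real n \<le> 8^(j+1)"
      using assms(4) by (metis of_nat_le_iff of_nat_numeral of_nat_power)
  qed
  have x0: "x \<ge> 0"
    using x block_threshold_nonneg[of \<epsilon> c j] by linarith
  have "real c = block_threshold \<epsilon> c j * real j powr (2 + \<epsilon>) / 4^(j+1)"
    unfolding block_threshold_def using assms(2) by simp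
  also have "\<dots> \<le> x * ln (real n) powr (2 + \<epsilon>) / 4^(j+1)"
    by (intro divide_right_mono mult_mono x L) (use x0 in auto)
  also have "\<dots> \<le> x * ln (real n) powr (2 + \<epsilon>) / real n powr (2/3)"
    by (rule divide_left_mono[OF Q]) (use n x0 in auto)
  finally show ?thesis .
qed

lemma block_threshold_sqrt_bound:
  assumes "1 \<le> j"
  shows "3 / 2^j * sqrt (2 * block_threshold \<epsilon> c j + 1) \<le>
    3 * sqrt (8 * real c) * real j powr (-(1 + \<epsilon>/2)) + 3 * (1/2)^j"
proof -
  let ?y = "block_threshold \<epsilon> c j"
  have "sqrt (2 * ?y + 1) \<le> sqrt (2 * ?y) + 1"
    using sqrt_add_le_add_sqrt[of "2 * ?y" 1] block_threshold_nonneg[of \<epsilon> c j] by simp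
  then have "3 / 2^j * sqrt (2 * ?y + 1) \<le> 3 / 2^j * (sqrt (2 * ?y) + 1)"
    by (rule mult_left_mono) simp
  also have "sqrt (2 * ?y) = 2^j * sqrt (8 * real c) / real j powr (1 + \<epsilon>/2)"
  proof -
    have "2 * ?y = 8 * real c * 4^j / real j powr (2 + \<epsilon>)"
      by (simp add: block_threshold_def)
    then have "sqrt (2 * ?y) = sqrt (8 * real c) * sqrt (4^j) / sqrt (real j powr (2 + \<epsilon>))"
      by (simp only: real_sqrt_divide real_sqrt_mult)
    moreover have "sqrt (4^j) = (2::real)^j"
      by (simp add: real_sqrt_power)
    moreover have "sqrt (real j powr (2 + \<epsilon>)) = real j powr (1 + \<epsilon>/2)"
      using powr_half_sqrt_powr[of "real j" "2 + \<epsilon>"] by (simp add: add_divide_distrib)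
    ultimately show ?thesis
      by simp
  qed
  also have "3 / 2^j * (2^j * sqrt (8 * real c) / real j powr (1 + \<epsilon>/2) + 1) =
      3 * sqrt (8 * real c) / real j powr (1 + \<epsilon>/2) + 3 * (1/2)^j"
    by (simp add: distrib_left power_one_over)
  also have "3 * sqrt (8 * real c) / real j powr (1 + \<epsilon>/2) =
      3 * sqrt (8 * real c) * real j powr (-(1 + \<epsilon>/2))"
    by (subst powr_minus_divide) simp
  finally show ?thesis .
qed

context boundary_chain
begin

definition low_in_block :: "real \<Rightarrow> nat \<Rightarrow> nat \<Rightarrow> 'a set" where
  "low_in_block \<epsilon> c j =
     {\<omega> \<in> space M. \<exists>t. 8^j \<le> t \<and> t \<le> 8^(j+1) \<and> real (X t \<omega>) \<le> block_threshold \<epsilon> c j}"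

lemma low_in_block_sets: "low_in_block \<epsilon> c j \<in> events"
proof -
  have "prefix_determined (8^(j+1))
      (\<lambda>s. \<exists>t. 8^j \<le> t \<and> t \<le> 8^(j+1) \<and> real (s t) \<le> block_threshold \<epsilon> c j)"
    unfolding prefix_determined_def by auto
  from prefix_event_sets[OF this] show ?thesis
    unfolding low_in_block_def .
qed

lemma prob_low_in_block_le:
  assumes "1 \<le> j"
  shows "prob (low_in_block \<epsilon> c j) \<le>
    3 * sqrt (8 * real c) * real j powr (-(1 + \<epsilon>/2)) + 3 * (1/2)^j"
proof -
  define y where "y = block_threshold \<epsilon> c j"
  define a where "a = nat \<lfloor>y\<rfloor>"
  have y: "0 \<le> y"
    unfolding y_def by (rule block_threshold_nonneg)
  have le_a: "x \<le> a \<longleftrightarrow> real x \<le> y" for x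
    unfolding a_def using y by (metis le_nat_floor of_nat_floor of_nat_le_iff order_trans)
  have "low_in_block \<epsilon> c j = {\<omega> \<in> space M. \<exists>t. 8^j \<le> t \<and> t \<le> 8^j + 7 * 8^j \<and> X t \<omega> \<le> a}"
    unfolding low_in_block_def y_def[symmetric] le_a by simp
  then have "potential a * prob (low_in_block \<epsilon> c j) \<le> mean_potential (8^j)"
    using maximal_inequality[of a "8^j" "7 * 8^j"] by simp
  then have "prob (low_in_block \<epsilon> c j) \<le> mean_potential (8^j) * (1 / potential a)"
    using potential_pos[of a] by (simp add: field_simps mult.commute)
  also have "\<dots> \<le> 3 / 2^j * sqrt (2 * real a + 1)"
    using mean_potential_pos[of "8^j"] potential_pos[of a]
    by (intro mult_mono mean_potential_block_le inverse_potential_le_sqrt) (auto simp: less_imp_le)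
  also have "\<dots> \<le> 3 / 2^j * sqrt (2 * y + 1)"
    using le_a[of a] by (intro mult_left_mono real_sqrt_le_mono) auto
  also have "\<dots> \<le> 3 * sqrt (8 * real c) * real j powr (-(1 + \<epsilon>/2)) + 3 * (1/2)^j"
    unfolding y_def by (rule block_threshold_sqrt_bound[OF assms])
  finally show ?thesis .
qed

lemma summable_prob_low_in_block:
  assumes "\<epsilon> > 0"
  shows "summable (\<lambda>j. prob (low_in_block \<epsilon> c j))"
proof (rule summable_comparison_test'[where N = 1])
  show "summable (\<lambda>j. 3 * sqrt (8 * real c) * real j powr (-(1 + \<epsilon>/2)) + 3 * (1/2::real)^j)"
    using assms by (intro summable_add summable_mult summable_geometric) (simp_all add: summable_real_powr_iff)
  show "norm (prob (low_in_block \<epsilon> c j)) \<le>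
      3 * sqrt (8 * real c) * real j powr (-(1 + \<epsilon>/2)) + 3 * (1/2::real)^j" if "1 \<le> j" for j
    using prob_low_in_block_le[OF that] by simp
qed

lemma AE_eventually_not_low_in_block:
  assumes "\<epsilon> > 0"
  shows "AE \<omega> in M. eventually (\<lambda>j. \<omega> \<notin> low_in_block \<epsilon> c j) sequentially"
proof -
  have "AE \<omega> in M. eventually (\<lambda>j. \<omega> \<in> space M - low_in_block \<epsilon> c j) sequentially"
    using low_in_block_sets summable_prob_low_in_block[OF assms]
    by (intro borel_cantelli_AE1) (auto simp: emeasure_eq_measure)
  then show ?thesis
    by (rule eventually_mono) (auto elim: eventually_mono)
qed

lemma filterlim_growth_if_eventually_not_low:
  assumes "\<epsilon> > 0" "\<omega> \<in> space M"
    and not_low: "\<And>c. eventually (\<lambda>j. \<omega> \<notin> low_in_block \<epsilon> c j) sequentially"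
  shows "filterlim (\<lambda>n. real (X n \<omega>) * ln (real n) powr (2 + \<epsilon>) / real n powr (2/3)) at_top sequentially"
  unfolding filterlim_at_top
proof
  fix Z :: real
  obtain c :: nat where c: "Z \<le> real c"
    using real_arch_simple by blast
  obtain J where J: "\<And>j. J \<le> j \<Longrightarrow> \<omega> \<notin> low_in_block \<epsilon> c j"
    using not_low[of c] unfolding eventually_sequentially by blast
  have "Z \<le> real (X n \<omega>) * ln (real n) powr (2 + \<epsilon>) / real n powr (2/3)" if n: "8^(max J 1) \<le> n" for n
  proof -
    have "1 \<le> n"
      using n by (metis le_trans one_le_numeral one_le_power)
    then obtain j where j: "8^j \<le> n" "n < 8^(j+1)"
      using ex_power_ivl1[of 8 n] by auto
    have "(8::nat)^(max J 1) < 8^(j+1)"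
      using n j(2) by linarith
    then have "max J 1 < j + 1"
      by (rule power_less_imp_less_exp[rotated]) simp
    then have "J \<le> j" "1 \<le> j"
      by auto
    then have "\<omega> \<notin> low_in_block \<epsilon> c j"
      using J by blast
    then have "\<not> real (X n \<omega>) \<le> block_threshold \<epsilon> c j"
      using j assms(2) unfolding low_in_block_def by auto
    then have "block_threshold \<epsilon> c j < real (X n \<omega>)"
      by simp
    then have "real c \<le> real (X n \<omega>) * ln (real n) powr (2 + \<epsilon>) / real n powr (2/3)"
      by (rule block_threshold_le_imp_growth[OF assms(1) \<open>1 \<le> j\<close> j(1) less_imp_le[OF j(2)] less_imp_le])
    with c show ?thesis
      by linarith
  qed
  then show "eventually (\<lambda>n. Z \<le> real (X n \<omega>) * ln (real n) powr (2 + \<epsilon>) / real n powr (2/3)) sequentially"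
    unfolding eventually_sequentially by blast
qed

lemma AE_filterlim_growth:
  assumes "\<epsilon> > 0"
  shows "AE \<omega> in M. filterlim
    (\<lambda>n. real (X n \<omega>) * ln (real n) powr (2 + \<epsilon>) / real n powr (2/3)) at_top sequentially"
proof -
  have "AE \<omega> in M. \<forall>c::nat. eventually (\<lambda>j. \<omega> \<notin> low_in_block \<epsilon> c j) sequentially"
    using AE_eventually_not_low_in_block[OF assms] by (simp add: AE_all_countable)
  with AE_space show ?thesis
    by eventually_elim (use filterlim_growth_if_eventually_not_low[OF assms] in blast)
qed

end

theorem theorem3p5:
  fixes M :: "'a measure" and X :: "nat \<Rightarrow> 'a \<Rightarrow> nat" and m0 :: nat and \<epsilon> :: real
  assumes "boundary_markov_chain M X m0" and "\<epsilon> > 0"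
  shows "AE \<omega> in M. filterlim
           (\<lambda>n. real (X n \<omega>) * ln (real n) powr (2 + \<epsilon>) / real n powr (2/3))
           at_top sequentially"
proof -
  interpret boundary_chain M X m0
    using assms(1)
    unfolding boundary_markov_chain_def boundary_chain_def boundary_chain_axioms_def by blast
  show ?thesis
    by (rule AE_filterlim_growth[OF assms(2)])
qed

end
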